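(* Let $X$ be a distance-regular graph of diameter $d\geq 2$ with degree $k$, $\lambda=a_1$ and $\mu=c_2$. Then $k-\mu\leq 2(k-\lambda)$. If moreover $a_2\neq 0$, then also $k-\lambda\leq 2(k-\mu)$.
   Context: A connected graph $X$ of diameter $d$ is distance-regular if there are integers $a_i,b_i,c_i$ ($0\le i\le d$) such that for all vertices $v,w$ with $\mathrm{dist}(v,w)=i$, $w$ has exactly $c_i$ neighbours at distance $i-1$, $a_i$ at distance $i$, $b_i$ at distance $i+1$ from $v$; $X$ is $k$-regular with $k=b_0$. Thus $\lambda=a_1$ is the number of common neighbours of two adjacent vertices and $\mu=c_2$ that of two vertices at distance 2. *)

theory Defs
  imports Main
begin

definition simple_graph :: "'v set \<Rightarrow> ('v \<Rightarrow> 'v \<Rightarrow> bool) \<Rightarrow> bool" where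
  "simple_graph V E \<longleftrightarrow> finite V \<and> V \<noteq> {} \<and>
     (\<forall>x\<in>V. \<forall>y\<in>V. E x y \<longleftrightarrow> E y x) \<and> (\<forall>x\<in>V. \<not> E x x)"

definition walk_of_length :: "'v set \<Rightarrow> ('v \<Rightarrow> 'v \<Rightarrow> bool) \<Rightarrow> 'v \<Rightarrow> 'v \<Rightarrow> nat \<Rightarrow> bool" where
  "walk_of_length V E v w n \<longleftrightarrow>
     (\<exists>p::'v list. length p = Suc n \<and> set p \<subseteq> V \<and> hd p = v \<and> last p = w \<and>
        (\<forall>i<n. E (p ! i) (p ! Suc i)))"

definition connected_graph :: "'v set \<Rightarrow> ('v \<Rightarrow> 'v \<Rightarrow> bool) \<Rightarrow> bool" where
  "connected_graph V E \<longleftrightarrow> (\<forall>v\<in>V. \<forall>w\<in>V. \<exists>n. walk_of_length V E v w n)"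

text \<open>Graph distance (meaningful for vertices of a connected graph).\<close>
definition gdist :: "'v set \<Rightarrow> ('v \<Rightarrow> 'v \<Rightarrow> bool) \<Rightarrow> 'v \<Rightarrow> 'v \<Rightarrow> nat" where
  "gdist V E v w = (LEAST n. walk_of_length V E v w n)"

definition diameter :: "'v set \<Rightarrow> ('v \<Rightarrow> 'v \<Rightarrow> bool) \<Rightarrow> nat" where
  "diameter V E = Max {gdist V E v w | v w. v \<in> V \<and> w \<in> V}"

text \<open>Distance-regular graph of diameter d with intersection numbers a_i, b_i, c_i
 (0 \<le> i \<le> d); for i = 0 the count of neighbours at distance i-1 is the empty count, so c_0 = 0.\<close>
definition distance_regular ::
  "'v set \<Rightarrow> ('v \<Rightarrow> 'v \<Rightarrow> bool) \<Rightarrow> nat \<Rightarrow> (nat \<Rightarrow> nat) \<Rightarrow> (nat \<Rightarrow> nat) \<Rightarrow> (nat \<Rightarrow> nat) \<Rightarrow> bool" where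
  "distance_regular V E d a b c \<longleftrightarrow>
     simple_graph V E \<and> connected_graph V E \<and> diameter V E = d \<and>
     (\<forall>i\<le>d. \<forall>v\<in>V. \<forall>w\<in>V. gdist V E v w = i \<longrightarrow>
        card {x\<in>V. E w x \<and> gdist V E v x + 1 = i} = c i \<and>
        card {x\<in>V. E w x \<and> gdist V E v x = i} = a i \<and>
        card {x\<in>V. E w x \<and> gdist V E v x = i + 1} = b i)"

end

theory Submission
  imports Defs
begin

text \<open>Fix vertices u, w at distance 2 and a common neighbour v. The neighbourhoods of u and of w
meet the neighbourhood of v in \<open>\<lambda>\<close> vertices each, and these two sets can only overlap inside the
\<open>\<mu>\<close> common neighbours of u and w; inclusion-exclusion inside the \<open>k\<close> neighbours of v gives
\<open>2\<lambda> \<le> k + \<mu>\<close>. If \<open>a\<^sub>2 \<noteq> 0\<close>, some neighbour x of w is also at distance 2 from u, and the same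
count inside the neighbourhood of u, with the roles of \<open>\<lambda>\<close> and \<open>\<mu>\<close> exchanged, gives \<open>2\<mu> \<le> k + \<lambda>\<close>.\<close>

lemma walk_of_length_0: "walk_of_length V E v w 0 \<longleftrightarrow> v = w \<and> v \<in> V"
  unfolding walk_of_length_def by (auto simp: length_Suc_conv)

lemma walk_of_length_Suc:
  "walk_of_length V E v w (Suc n) \<longleftrightarrow> (\<exists>u. walk_of_length V E v u n \<and> E u w \<and> w \<in> V)"
proof
  assume "walk_of_length V E v w (Suc n)"
  then obtain p where p: "length p = Suc (Suc n)" "set p \<subseteq> V" "hd p = v" "last p = w"
    "\<forall>i<Suc n. E (p ! i) (p ! Suc i)" unfolding walk_of_length_def by blast
  have p_ne: "p \<noteq> []" using p(1) by auto
  let ?q = "butlast p"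
  have q: "length ?q = Suc n" "\<And>i. i < Suc n \<Longrightarrow> ?q ! i = p ! i"
    using p(1) by (simp_all add: nth_butlast)
  have q_ne: "?q \<noteq> []" using q(1) by (metis length_0_conv nat.distinct(1))
  have "hd ?q = v" "last ?q = p ! n"
    using q q_ne p(3) p_ne by (simp_all add: hd_conv_nth last_conv_nth)
  moreover have "set ?q \<subseteq> V" using p(2) in_set_butlastD by fastforce
  ultimately have "walk_of_length V E v (p ! n) n"
    unfolding walk_of_length_def using q p(5) by (intro exI[of _ ?q]) auto
  moreover have "p ! Suc n = w" "w \<in> V" using p(1,2,4) p_ne by (auto simp: last_conv_nth)
  ultimately show "\<exists>u. walk_of_length V E v u n \<and> E u w \<and> w \<in> V" using p(5) by auto
next
  assume "\<exists>u. walk_of_length V E v u n \<and> E u w \<and> w \<in> V"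
  then obtain u q where q: "length q = Suc n" "set q \<subseteq> V" "hd q = v" "last q = u"
    "\<forall>i<n. E (q ! i) (q ! Suc i)" and uw: "E u w" "w \<in> V"
    unfolding walk_of_length_def by blast
  have q_ne: "q \<noteq> []" using q(1) by auto
  have "\<forall>i<Suc n. E ((q @ [w]) ! i) ((q @ [w]) ! Suc i)"
    using q(1,4,5) q_ne uw(1) by (auto simp: nth_append last_conv_nth less_Suc_eq)
  then show "walk_of_length V E v w (Suc n)"
    unfolding walk_of_length_def using q q_ne uw by (intro exI[of _ "q @ [w]"]) auto
qed

lemma walk_of_length_1: "walk_of_length V E v w 1 \<longleftrightarrow> E v w \<and> v \<in> V \<and> w \<in> V"
  unfolding One_nat_def walk_of_length_Suc walk_of_length_0 by auto

lemma walk_of_length_2: "walk_of_length V E v w 2 \<longleftrightarrow> (\<exists>u\<in>V. E v u \<and> E u w) \<and> v \<in> V \<and> w \<in> V"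
  unfolding numeral_2_eq_2 walk_of_length_Suc walk_of_length_0 by blast

lemma walk_of_length_endpoints: "walk_of_length V E v w n \<Longrightarrow> v \<in> V \<and> w \<in> V"
  by (induction n arbitrary: w) (auto simp: walk_of_length_0 walk_of_length_Suc)

lemma walk_of_length_append:
  "walk_of_length V E v u m \<Longrightarrow> walk_of_length V E u w n \<Longrightarrow> walk_of_length V E v w (m + n)"
  by (induction n arbitrary: w) (auto simp: walk_of_length_0 walk_of_length_Suc)

lemma walk_of_length_split:
  "walk_of_length V E v w (m + n) \<Longrightarrow> \<exists>u. walk_of_length V E v u m \<and> walk_of_length V E u w n"
proof (induction n arbitrary: w)
  case 0
  then show ?case using walk_of_length_endpoints by (fastforce simp: walk_of_length_0)
next
  case (Suc n)
  then obtain y where "walk_of_length V E v y (m + n)" "E y w" "w \<in> V"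
    unfolding add_Suc_right walk_of_length_Suc by blast
  with Suc.IH show ?case unfolding walk_of_length_Suc by blast
qed

lemma gdist_le: "walk_of_length V E v w n \<Longrightarrow> gdist V E v w \<le> n"
  unfolding gdist_def by (rule Least_le)

lemma walk_of_length_gdist:
  "connected_graph V E \<Longrightarrow> v \<in> V \<Longrightarrow> w \<in> V \<Longrightarrow> walk_of_length V E v w (gdist V E v w)"
  unfolding gdist_def connected_graph_def by (meson LeastI_ex)

lemma gdist_self: "v \<in> V \<Longrightarrow> gdist V E v v = 0"
  using gdist_le[of V E v v 0] by (simp add: walk_of_length_0)

lemma gdist_triangle:
  assumes "connected_graph V E" "u \<in> V" "v \<in> V" "w \<in> V"
  shows "gdist V E u w \<le> gdist V E u v + gdist V E v w"
  using assms by (meson gdist_le walk_of_length_append walk_of_length_gdist)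

lemma gdist_eq_1_iff:
  assumes "simple_graph V E" "connected_graph V E" "v \<in> V" "w \<in> V"
  shows "gdist V E v w = 1 \<longleftrightarrow> E v w"
proof
  assume "gdist V E v w = 1"
  then show "E v w" using walk_of_length_gdist[OF assms(2-4)] walk_of_length_1 by metis
next
  assume "E v w"
  then have "v \<noteq> w" "walk_of_length V E v w 1"
    using assms unfolding simple_graph_def walk_of_length_1 by auto
  then show "gdist V E v w = 1"
    using gdist_le walk_of_length_gdist[OF assms(2-4)] walk_of_length_0
    by (metis le_neq_implies_less less_one)
qed

lemma gdist_eq_2_midpoint:
  assumes "connected_graph V E" "v \<in> V" "w \<in> V" "gdist V E v w = 2"
  obtains u where "u \<in> V" "E v u" "E u w"
proof -
  have "walk_of_length V E v w 2" using walk_of_length_gdist[OF assms(1-3)] assms(4) by simp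
  then show ?thesis using that unfolding walk_of_length_2 by blast
qed

lemma diameter_attained:
  assumes "simple_graph V E"
  obtains v w where "v \<in> V" "w \<in> V" "gdist V E v w = diameter V E"
proof -
  let ?D = "{gdist V E v w | v w. v \<in> V \<and> w \<in> V}"
  have "?D = (\<lambda>(v, w). gdist V E v w) ` (V \<times> V)" by auto
  then have "finite ?D" "?D \<noteq> {}" using assms unfolding simple_graph_def by auto
  then have "Max ?D \<in> ?D" by (rule Max_in)
  then show ?thesis using that unfolding diameter_def by auto
qed

text \<open>Cut a diametral geodesic after i steps: the initial piece cannot be shortcut, since the
triangle inequality would then shorten the whole geodesic.\<close>

lemma gdist_attained_le_diameter:
  assumes "simple_graph V E" "connected_graph V E" "i \<le> diameter V E"
  obtains v w where "v \<in> V" "w \<in> V" "gdist V E v w = i"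
proof -
  obtain v z where vz: "v \<in> V" "z \<in> V" "gdist V E v z = diameter V E"
    using diameter_attained[OF assms(1)] .
  have "i + (diameter V E - i) = gdist V E v z" using assms(3) vz(3) by linarith
  then have "walk_of_length V E v z (i + (diameter V E - i))"
    using walk_of_length_gdist[OF assms(2) vz(1,2)] by argo
  then obtain y where y: "walk_of_length V E v y i" "walk_of_length V E y z (diameter V E - i)"
    using walk_of_length_split[of V E v z i "diameter V E - i"] by blast
  have y_in: "y \<in> V" using walk_of_length_endpoints[OF y(1)] by simp
  have "diameter V E \<le> gdist V E v y + gdist V E y z"
    using gdist_triangle[OF assms(2) vz(1) y_in vz(2)] unfolding vz(3) .
  moreover have "gdist V E v y \<le> i" "gdist V E y z \<le> diameter V E - i"
    using gdist_le[OF y(1)] gdist_le[OF y(2)] .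
  ultimately have "gdist V E v y = i" using assms(3) by linarith
  then show ?thesis using that vz(1) y_in by blast
qed

definition nbhd :: "'v set \<Rightarrow> ('v \<Rightarrow> 'v \<Rightarrow> bool) \<Rightarrow> 'v \<Rightarrow> 'v set" where
  "nbhd V E v = {x\<in>V. E v x}"

lemma card_add_le_card_Int:
  assumes "finite C" "A \<subseteq> C" "B \<subseteq> C"
  shows "card A + card B \<le> card C + card (A \<inter> B)"
proof -
  have "finite A" "finite B" using assms finite_subset by auto
  then have "card A + card B = card (A \<union> B) + card (A \<inter> B)" by (rule card_Un_Int)
  also have "card (A \<union> B) \<le> card C" using assms by (intro card_mono) auto
  finally show ?thesis by simp
qed

lemma card_common_nbhds_le:
  assumes "finite V"
  shows "card (nbhd V E p \<inter> nbhd V E q) + card (nbhd V E p \<inter> nbhd V E r)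
    \<le> card (nbhd V E p) + card (nbhd V E q \<inter> nbhd V E r)"
proof -
  have "card (nbhd V E p \<inter> nbhd V E q) + card (nbhd V E p \<inter> nbhd V E r)
      \<le> card (nbhd V E p) + card (nbhd V E p \<inter> nbhd V E q \<inter> (nbhd V E p \<inter> nbhd V E r))"
    using assms by (intro card_add_le_card_Int) (auto simp: nbhd_def)
  also have "\<dots> \<le> card (nbhd V E p) + card (nbhd V E q \<inter> nbhd V E r)"
    using assms by (intro add_left_mono card_mono) (auto simp: nbhd_def)
  finally show ?thesis .
qed

locale distance_regular_graph =
  fixes V :: "'v set" and E :: "'v \<Rightarrow> 'v \<Rightarrow> bool"
    and d :: nat and a b c :: "nat \<Rightarrow> nat"
  assumes distance_regular: "distance_regular V E d a b c"
begin

abbreviation "N \<equiv> nbhd V E"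

lemma simple: "simple_graph V E" and connected: "connected_graph V E"
  and diameter_eq: "diameter V E = d"
  using distance_regular unfolding distance_regular_def by blast+

lemma intersection_numbers:
  assumes "i \<le> d" "v \<in> V" "w \<in> V" "gdist V E v w = i"
  shows "card {x\<in>V. E w x \<and> gdist V E v x + 1 = i} = c i"
    and "card {x\<in>V. E w x \<and> gdist V E v x = i} = a i"
    and "card {x\<in>V. E w x \<and> gdist V E v x = i + 1} = b i"
  using distance_regular assms unfolding distance_regular_def by blast+

lemma finite_vertices: "finite V"
  using simple unfolding simple_graph_def by blast

lemma nbhd_eq_gdist_1: "v \<in> V \<Longrightarrow> N v = {x\<in>V. gdist V E v x = 1}"
  using gdist_eq_1_iff[OF simple connected] by (auto simp: nbhd_def)

lemma card_nbhd:
  assumes "v \<in> V"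
  shows "card (N v) = b 0"
proof -
  have "{x\<in>V. E v x \<and> gdist V E v x = 0 + 1} = N v"
    using nbhd_eq_gdist_1[OF assms] by (auto simp: nbhd_def)
  then show ?thesis using intersection_numbers(3)[of 0 v v] assms gdist_self[of v V E] by simp
qed

lemma card_common_nbhd_adjacent:
  assumes "d \<ge> 1" "v \<in> V" "w \<in> V" "E v w"
  shows "card (N v \<inter> N w) = a 1"
proof -
  have "gdist V E v w = 1" using gdist_eq_1_iff[OF simple connected] assms by blast
  then have "card {x\<in>V. E w x \<and> gdist V E v x = 1} = a 1"
    using intersection_numbers(2) assms by blast
  moreover have "{x\<in>V. E w x \<and> gdist V E v x = 1} = N v \<inter> N w"
    using nbhd_eq_gdist_1[OF assms(2)] by (auto simp: nbhd_def)
  ultimately show ?thesis by simp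
qed

lemma card_common_nbhd_gdist_2:
  assumes "d \<ge> 2" "v \<in> V" "w \<in> V" "gdist V E v w = 2"
  shows "card (N v \<inter> N w) = c 2"
proof -
  have "card {x\<in>V. E w x \<and> gdist V E v x + 1 = 2} = c 2"
    using intersection_numbers(1) assms by blast
  moreover have "{x\<in>V. E w x \<and> gdist V E v x + 1 = 2} = N v \<inter> N w"
    using nbhd_eq_gdist_1[OF assms(2)] by (auto simp: nbhd_def)
  ultimately show ?thesis by simp
qed

lemma a2_nonzero_witness:
  assumes "d \<ge> 2" "a 2 \<noteq> 0" "v \<in> V" "w \<in> V" "gdist V E v w = 2"
  obtains x where "x \<in> V" "E w x" "gdist V E v x = 2"
proof -
  have "card {x\<in>V. E w x \<and> gdist V E v x = 2} \<noteq> 0"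
    using intersection_numbers(2) assms by simp
  then have "{x\<in>V. E w x \<and> gdist V E v x = 2} \<noteq> {}" by (intro notI) simp
  then show ?thesis using that by blast
qed

lemma exists_gdist_2:
  assumes "d \<ge> 2"
  obtains v w where "v \<in> V" "w \<in> V" "gdist V E v w = 2"
  using gdist_attained_le_diameter[OF simple connected] assms diameter_eq by metis

lemma lambda_bound: "d \<ge> 2 \<Longrightarrow> 2 * a 1 \<le> b 0 + c 2"
proof -
  assume d: "d \<ge> 2"
  obtain u w where uw: "u \<in> V" "w \<in> V" "gdist V E u w = 2" using exists_gdist_2[OF d] .
  then obtain v where v: "v \<in> V" "E u v" "E v w" using gdist_eq_2_midpoint[OF connected] by metis
  have "card (N v \<inter> N u) = a 1" "card (N v \<inter> N w) = a 1"
    using card_common_nbhd_adjacent[of v u] card_common_nbhd_adjacent[of v w] simple d v uw(1,2)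
    unfolding simple_graph_def by auto
  moreover have "card (N u \<inter> N w) = c 2" using card_common_nbhd_gdist_2 d uw by blast
  ultimately show ?thesis
    using card_common_nbhds_le[OF finite_vertices, of E v u w] v(1) card_nbhd by simp
qed

lemma mu_bound: "d \<ge> 2 \<Longrightarrow> a 2 \<noteq> 0 \<Longrightarrow> 2 * c 2 \<le> b 0 + a 1"
proof -
  assume d: "d \<ge> 2" and a2: "a 2 \<noteq> 0"
  obtain u w where uw: "u \<in> V" "w \<in> V" "gdist V E u w = 2" using exists_gdist_2[OF d] .
  then obtain x where x: "x \<in> V" "E w x" "gdist V E u x = 2" using a2_nonzero_witness[OF d a2] by metis
  have "card (N u \<inter> N w) = c 2" "card (N u \<inter> N x) = c 2"
    using card_common_nbhd_gdist_2 d uw x by blast+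
  moreover have "card (N w \<inter> N x) = a 1" using card_common_nbhd_adjacent d uw(2) x by simp
  ultimately show ?thesis
    using card_common_nbhds_le[OF finite_vertices, of E u w x] uw(1) card_nbhd by simp
qed

end

theorem lemma4p1:
  fixes V :: "'v set" and E :: "'v \<Rightarrow> 'v \<Rightarrow> bool"
    and d :: nat and a b c :: "nat \<Rightarrow> nat"
  assumes "distance_regular V E d a b c"
    and "d \<ge> 2"
  shows "int (b 0) - int (c 2) \<le> 2 * (int (b 0) - int (a 1)) \<and>
         (a 2 \<noteq> 0 \<longrightarrow> int (b 0) - int (a 1) \<le> 2 * (int (b 0) - int (c 2)))"
proof -
  interpret distance_regular_graph V E d a b c by standard (fact assms(1))
  show ?thesis
  proof (intro conjI impI)
    show "int (b 0) - int (c 2) \<le> 2 * (int (b 0) - int (a 1))"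
      using lambda_bound[OF assms(2)] by arith
  next
    assume "a 2 \<noteq> 0"
    then show "int (b 0) - int (a 1) \<le> 2 * (int (b 0) - int (c 2))"
      using mu_bound[OF assms(2)] by arith
  qed
qed

end
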